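(* Let $u(x,t)$ be sufficiently smooth in $x$ (with bounded derivatives), $h>0$, and define the operators $$\mathscr L_1=\frac{1}{h^2}\Big(1-\frac1{90}\delta_x^4\Big)^{-1}\delta_x^2\Big(1-\frac1{12}\delta_x^2\Big),\qquad \mathscr L_2=\frac{1}{h^2}\Big(1+\frac1{560}\delta_x^6\Big)^{-1}\delta_x^2\Big(1-\frac1{12}\delta_x^2+\frac1{90}\delta_x^4\Big).$$ Then $$\frac{\partial^2u(x_j,t_k)}{\partial x^2}=\mathscr L_1u(x_j,t_k)+O(h^6)\quad\text{and}\quad \frac{\partial^2u(x_j,t_k)}{\partial x^2}=\mathscr L_2u(x_j,t_k)+O(h^8).$$
   Context: $\delta_x$ is the centered difference in $x$ with step $h$: $\delta_x u(x,t)=u(x+\frac h2,t)-u(x-\frac h2,t)$, so $\delta_x^2u(x,t)=u(x+h,t)-2u(x,t)+u(x-h,t)$, and $\delta_x^{2m}=(\delta_x^2)^m$. The operators act on functions of $x$ (with $t$ fixed), and $x_j=jh$, $t_k$ are grid points; the inverses $(1-\frac1{90}\delta_x^4)^{-1}$, $(1+\frac1{560}\delta_x^6)^{-1}$ are understood as the inverses of these difference operators (e.g. by their convergent Neumann series on bounded functions). *)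

theory Defs
  imports "HOL-Analysis.Analysis"
begin

definition dx2 :: "real \<Rightarrow> (real \<Rightarrow> real) \<Rightarrow> (real \<Rightarrow> real)" where
  "dx2 h f = (\<lambda>x. f (x + h) - 2 * f x + f (x - h))"

text \<open>Inverse of (1 - A) via its Neumann series: (1 - A)^{-1} g = sum_n A^n g (pointwise).\<close>
definition neumann_inv :: "((real \<Rightarrow> real) \<Rightarrow> (real \<Rightarrow> real)) \<Rightarrow> (real \<Rightarrow> real) \<Rightarrow> (real \<Rightarrow> real)" where
  "neumann_inv A g = (\<lambda>x. \<Sum>n. (A ^^ n) g x)"

definition L1 :: "real \<Rightarrow> (real \<Rightarrow> real) \<Rightarrow> (real \<Rightarrow> real)" where
  "L1 h f = (\<lambda>x. (1 / h^2) *
     neumann_inv (\<lambda>\<phi> y. (1/90) * ((dx2 h ^^ 2) \<phi>) y)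
       (dx2 h (\<lambda>y. f y - (1/12) * (dx2 h f) y)) x)"

definition L2 :: "real \<Rightarrow> (real \<Rightarrow> real) \<Rightarrow> (real \<Rightarrow> real)" where
  "L2 h f = (\<lambda>x. (1 / h^2) *
     neumann_inv (\<lambda>\<phi> y. - (1/560) * ((dx2 h ^^ 3) \<phi>) y)
       (dx2 h (\<lambda>y. f y - (1/12) * (dx2 h f) y + (1/90) * ((dx2 h ^^ 2) f) y)) x)"

end

theory Submission
  imports Defs
begin

text \<open>
  Write each operator as \<open>h\<^sup>2 L u = (1 - A)\<^sup>-\<^sup>1 g\<close>.  On bounded functions \<open>A\<close> is a contraction
  with ratio \<open>q = 16/90\<close> resp. \<open>64/560\<close>, so for \<open>v = h\<^sup>2 u\<^sub>x\<^sub>x\<close> the difference \<open>v - h\<^sup>2 L u\<close> is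
  the Neumann series applied to the residual \<open>v - A v - g\<close> and is at most that residual divided
  by \<open>1 - q\<close>.  The residual is a fixed linear combination of the values of \<open>u\<close> and \<open>v\<close> on a
  five- (resp. seven-) point stencil which annihilates the Taylor polynomials of degree 7
  (resp. 9) of \<open>u\<close> together with their second derivatives; Taylor's theorem therefore makes it
  \<open>O(h\<^sup>8)\<close> (resp. \<open>O(h\<^sup>1\<^sup>0)\<close>).
\<close>

lemma neumann_inv_error:
  fixes A :: "(real \<Rightarrow> real) \<Rightarrow> real \<Rightarrow> real"
  assumes diff: "\<And>\<phi> \<psi>. A (\<lambda>y. \<phi> y - \<psi> y) = (\<lambda>y. A \<phi> y - A \<psi> y)"
    and contraction: "\<And>\<phi> M. \<forall>y. \<bar>\<phi> y\<bar> \<le> M \<Longrightarrow> \<forall>y. \<bar>A \<phi> y\<bar> \<le> q * M"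
    and q: "0 \<le> q" "q < 1"
    and v_bounded: "\<forall>y. \<bar>v y\<bar> \<le> M"
    and residual: "\<forall>y. \<bar>v y - A v y - g y\<bar> \<le> K"
  shows "\<bar>v x - neumann_inv A g x\<bar> \<le> K / (1 - q)"
proof -
  define r where "r = (\<lambda>y. v y - A v y - g y)"
  have funpow_diff: "(A ^^ n) (\<lambda>y. \<phi> y - \<psi> y) = (\<lambda>y. (A ^^ n) \<phi> y - (A ^^ n) \<psi> y)" for n \<phi> \<psi>
    by (induction n) (simp_all add: diff)
  have funpow_bound: "\<bar>(A ^^ n) \<phi> y\<bar> \<le> q ^ n * N" if "\<forall>y. \<bar>\<phi> y\<bar> \<le> N" for n \<phi> N y
  proof -
    have "\<forall>y. \<bar>(A ^^ n) \<phi> y\<bar> \<le> q ^ n * N"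
      by (induction n) (use that contraction in \<open>auto simp: mult.assoc\<close>)
    then show ?thesis ..
  qed
  have g: "g = (\<lambda>y. (\<lambda>y. v y - A v y) y - r y)"
    by (simp add: r_def)
  have term_eq: "(A ^^ n) g x = ((A ^^ n) v x - (A ^^ Suc n) v x) - (A ^^ n) r x" for n
    by (subst g) (simp add: funpow_diff funpow_swap1)
  \<comment> \<open>The \<open>v\<close>-parts of the Neumann series telescope; what is left is the series applied to \<open>r\<close>.\<close>
  have "(\<lambda>n. (A ^^ n) v x) \<longlonglongrightarrow> 0"
  proof (rule Lim_null_comparison)
    show "\<forall>\<^sub>F n in sequentially. norm ((A ^^ n) v x) \<le> q ^ n * M"
      using funpow_bound[OF v_bounded] by simp
    show "(\<lambda>n. q ^ n * M) \<longlonglongrightarrow> 0"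
      by (intro tendsto_mult_left_zero LIMSEQ_power_zero) (use q in simp)
  qed
  then have telescope: "(\<lambda>n. (A ^^ n) v x - (A ^^ Suc n) v x) sums v x"
    using telescope_sums' by fastforce
  have geometric: "(\<lambda>n. q ^ n * K) sums (K / (1 - q))"
    using sums_mult2[OF geometric_sums[of q]] q by (simp add: field_simps)
  have r_terms: "norm ((A ^^ n) r x) \<le> q ^ n * K" for n
    using funpow_bound[of r K n x] residual by (simp add: r_def)
  have r_summable: "summable (\<lambda>n. norm ((A ^^ n) r x))"
    by (rule summable_comparison_test'[OF sums_summable[OF geometric]]) (use r_terms in auto)
  have "neumann_inv A g x = v x - (\<Sum>n. (A ^^ n) r x)"
    unfolding neumann_inv_def term_eq
    using suminf_diff[OF sums_summable[OF telescope] summable_norm_cancel[OF r_summable]]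
      sums_unique[OF telescope] by simp
  moreover have "\<bar>\<Sum>n. (A ^^ n) r x\<bar> \<le> K / (1 - q)"
    using summable_norm[OF r_summable] suminf_le[OF r_terms r_summable sums_summable[OF geometric]]
      sums_unique[OF geometric] by simp
  ultimately show ?thesis by simp
qed

lemma dx2_diff: "dx2 h (\<lambda>y. \<phi> y - \<psi> y) = (\<lambda>y. dx2 h \<phi> y - dx2 h \<psi> y)"
  by (simp add: dx2_def fun_eq_iff algebra_simps)

lemma funpow_dx2_diff:
  "(dx2 h ^^ n) (\<lambda>y. \<phi> y - \<psi> y) = (\<lambda>y. (dx2 h ^^ n) \<phi> y - (dx2 h ^^ n) \<psi> y)"
  by (induction n) (simp_all add: dx2_diff)

lemma funpow_dx2_bounded:
  assumes "\<forall>y. \<bar>\<phi> y\<bar> \<le> M"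
  shows "\<forall>y. \<bar>(dx2 h ^^ n) \<phi> y\<bar> \<le> 4 ^ n * M"
proof (induction n)
  case (Suc n)
  show ?case
  proof
    fix y
    from Suc[rule_format, of "y + h"] Suc[rule_format, of y] Suc[rule_format, of "y - h"]
    show "\<bar>(dx2 h ^^ Suc n) \<phi> y\<bar> \<le> 4 ^ Suc n * M"
      by (simp add: dx2_def)
  qed
qed (use assms in simp)

lemma taylor_remainder_bound:
  fixes D :: "nat \<Rightarrow> real \<Rightarrow> real"
  assumes der: "\<And>j z. j < n \<Longrightarrow> (D j has_real_derivative D (Suc j) z) (at z)"
    and bnd: "\<And>z. \<bar>D n z\<bar> \<le> B"
  shows "\<bar>D 0 (x + z) - (\<Sum>k<n. D k x / fact k * z ^ k)\<bar> \<le> B * \<bar>z\<bar> ^ n"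
proof -
  have "\<exists>t. \<bar>t\<bar> \<le> \<bar>z\<bar> \<and> (\<lambda>s. D 0 (x + s)) z =
          (\<Sum>k<n. (\<lambda>s. D k (x + s)) 0 / fact k * z ^ k) + (\<lambda>s. D n (x + s)) t / fact n * z ^ n"
  proof (rule Maclaurin_bi_le)
    show "\<forall>k t. k < n \<and> \<bar>t\<bar> \<le> \<bar>z\<bar> \<longrightarrow>
            ((\<lambda>s. D k (x + s)) has_real_derivative D (Suc k) (x + t)) (at t)"
    proof (intro allI impI)
      fix k t assume "k < n \<and> \<bar>t\<bar> \<le> \<bar>z\<bar>"
      then have "(D k has_real_derivative D (Suc k) (x + t)) (at (x + t))"
        using der by blast
      then show "((\<lambda>s. D k (x + s)) has_real_derivative D (Suc k) (x + t)) (at t)"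
        using DERIV_shift[of "D k" _ t x] by (simp add: add.commute)
    qed
  qed simp
  then obtain t where t: "D 0 (x + z) = (\<Sum>k<n. D k x / fact k * z ^ k) + D n (x + t) / fact n * z ^ n"
    by auto
  have "\<bar>D n (x + t)\<bar> / fact n \<le> \<bar>D n (x + t)\<bar>"
    using fact_ge_1[of n] by (simp add: divide_le_eq mult_le_cancel_left1)
  then have "\<bar>D n (x + t)\<bar> / fact n \<le> B"
    using bnd[of "x + t"] by linarith
  then have "\<bar>D n (x + t) / fact n * z ^ n\<bar> \<le> B * \<bar>z\<bar> ^ n"
    unfolding abs_mult power_abs by (intro mult_right_mono) simp_all
  then show ?thesis
    unfolding t by simp
qed

lemma taylor_grid:
  fixes D :: "nat \<Rightarrow> real \<Rightarrow> real"
  assumes der: "\<And>j z. j < n \<Longrightarrow> (D j has_real_derivative D (Suc j) z) (at z)"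
    and bnd: "\<And>z. \<bar>D n z\<bar> \<le> B"
  shows "\<bar>D 0 (y + of_int m * h) - (\<Sum>k<n. of_int m ^ k * (D k y * h ^ k / fact k))\<bar>
           \<le> \<bar>of_int m\<bar> ^ n * (B * \<bar>h\<bar> ^ n)"
proof -
  have "(\<Sum>k<n. of_int m ^ k * (D k y * h ^ k / fact k)) = (\<Sum>k<n. D k y / fact k * (of_int m * h) ^ k)"
    by (simp add: power_mult_distrib mult_ac)
  with taylor_remainder_bound[OF der bnd, of y "of_int m * h"] show ?thesis
    by (simp add: abs_mult power_mult_distrib mult_ac)
qed

lemma taylor_grid_second_derivative:
  fixes D :: "nat \<Rightarrow> real \<Rightarrow> real"
  assumes der: "\<And>j z. j < n + 2 \<Longrightarrow> (D j has_real_derivative D (Suc j) z) (at z)"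
    and bnd: "\<And>z. \<bar>D (n + 2) z\<bar> \<le> B"
  shows "\<bar>h\<^sup>2 * D 2 (y + of_int m * h)
            - (\<Sum>k<n. of_int m ^ k * (real ((k + 2) * (k + 1)) * (D (k + 2) y * h ^ (k + 2) / fact (k + 2))))\<bar>
           \<le> \<bar>of_int m\<bar> ^ n * (B * \<bar>h\<bar> ^ (n + 2))"
    (is "\<bar>_ - ?T\<bar> \<le> _")
proof -
  define S where "S = (\<Sum>k<n. of_int m ^ k * (D (k + 2) y * h ^ k / fact k))"
  have coeff: "h\<^sup>2 * (of_int m ^ k * (D (k + 2) y * h ^ k / fact k))
      = of_int m ^ k * (real ((k + 2) * (k + 1)) * (D (k + 2) y * h ^ (k + 2) / fact (k + 2)))" for k
  proof -
    have "(fact (k + 2) :: real) = real ((k + 2) * (k + 1)) * fact k"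
      by (simp add: fact_Suc algebra_simps)
    moreover have "real ((k + 2) * (k + 1)) \<noteq> 0"
      by (simp only: of_nat_eq_0_iff) simp
    ultimately show ?thesis
      by (simp add: power_add power2_eq_square mult_ac)
  qed
  have "\<bar>D (0 + 2) (y + of_int m * h) - S\<bar> \<le> \<bar>of_int m\<bar> ^ n * (B * \<bar>h\<bar> ^ n)"
    unfolding S_def by (rule taylor_grid[where D = "\<lambda>k. D (k + 2)"]) (use der bnd in auto)
  then have "\<bar>D 2 (y + of_int m * h) - S\<bar> \<le> \<bar>of_int m\<bar> ^ n * (B * \<bar>h\<bar> ^ n)"
    by (simp only: add_0)
  then have "h\<^sup>2 * \<bar>D 2 (y + of_int m * h) - S\<bar> \<le> h\<^sup>2 * (\<bar>of_int m\<bar> ^ n * (B * \<bar>h\<bar> ^ n))"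
    by (simp add: mult_left_mono)
  moreover have "h\<^sup>2 * (\<bar>of_int m\<bar> ^ n * (B * \<bar>h\<bar> ^ n)) = \<bar>of_int m\<bar> ^ n * (B * \<bar>h\<bar> ^ (n + 2))"
    by (subst power2_abs[symmetric]) (simp add: power_add power2_eq_square mult_ac)
  moreover have T: "h\<^sup>2 * S = ?T"
    unfolding S_def sum_distrib_left coeff ..
  moreover have "h\<^sup>2 * \<bar>D 2 (y + of_int m * h) - S\<bar> = \<bar>h\<^sup>2 * D 2 (y + of_int m * h) - ?T\<bar>"
    unfolding T[symmetric] right_diff_distrib[symmetric] abs_mult abs_power2 by (rule refl)
  ultimately show ?thesis by simp
qed

lemma stencil_error_bound:
  fixes a b f v P Q E F :: "int \<Rightarrow> real"
  assumes "finite S"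
    and "\<And>m. m \<in> S \<Longrightarrow> \<bar>f m - P m\<bar> \<le> E m"
    and "\<And>m. m \<in> S \<Longrightarrow> \<bar>v m - Q m\<bar> \<le> F m"
    and consistent: "(\<Sum>m\<in>S. a m * P m + b m * Q m) = 0"
  shows "\<bar>\<Sum>m\<in>S. a m * f m + b m * v m\<bar> \<le> (\<Sum>m\<in>S. \<bar>a m\<bar> * E m + \<bar>b m\<bar> * F m)"
proof -
  have "(\<Sum>m\<in>S. a m * f m + b m * v m) = (\<Sum>m\<in>S. a m * (f m - P m) + b m * (v m - Q m))"
    using consistent by (simp add: algebra_simps sum.distrib sum_subtractf)
  also have "\<bar>\<dots>\<bar> \<le> (\<Sum>m\<in>S. \<bar>a m * (f m - P m) + b m * (v m - Q m)\<bar>)"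
    by (rule sum_abs)
  also have "\<dots> \<le> (\<Sum>m\<in>S. \<bar>a m\<bar> * E m + \<bar>b m\<bar> * F m)"
  proof (rule sum_mono)
    fix m assume "m \<in> S"
    with assms(2,3) have "\<bar>a m\<bar> * \<bar>f m - P m\<bar> \<le> \<bar>a m\<bar> * E m" "\<bar>b m\<bar> * \<bar>v m - Q m\<bar> \<le> \<bar>b m\<bar> * F m"
      by (simp_all add: mult_left_mono)
    moreover have "\<bar>a m * (f m - P m) + b m * (v m - Q m)\<bar> \<le> \<bar>a m\<bar> * \<bar>f m - P m\<bar> + \<bar>b m\<bar> * \<bar>v m - Q m\<bar>"
      unfolding abs_mult[symmetric] by (rule abs_triangle_ineq)
    ultimately show "\<bar>a m * (f m - P m) + b m * (v m - Q m)\<bar> \<le> \<bar>a m\<bar> * E m + \<bar>b m\<bar> * F m"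
      by linarith
  qed
  finally show ?thesis .
qed

lemma neumann_scheme_error:
  fixes A :: "(real \<Rightarrow> real) \<Rightarrow> real \<Rightarrow> real" and w :: "real \<Rightarrow> real"
  assumes diff: "\<And>\<phi> \<psi>. A (\<lambda>y. \<phi> y - \<psi> y) = (\<lambda>y. A \<phi> y - A \<psi> y)"
    and contraction: "\<And>\<phi> M. \<forall>y. \<bar>\<phi> y\<bar> \<le> M \<Longrightarrow> \<forall>y. \<bar>A \<phi> y\<bar> \<le> q * M"
    and q: "0 \<le> q" "q < 1"
    and bounded: "\<And>y. \<bar>w y\<bar> \<le> M"
    and residual: "\<And>y. \<bar>h\<^sup>2 * w y - A (\<lambda>z. h\<^sup>2 * w z) y - g y\<bar> \<le> C * h ^ (p + 2)"
    and "h \<noteq> 0"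
  shows "\<bar>w x - 1 / h\<^sup>2 * neumann_inv A g x\<bar> \<le> C / (1 - q) * h ^ p"
proof -
  have "\<forall>y. \<bar>h\<^sup>2 * w y\<bar> \<le> h\<^sup>2 * M"
    using bounded by (simp add: abs_mult mult_left_mono)
  with residual have scaled: "\<bar>h\<^sup>2 * w x - neumann_inv A g x\<bar> \<le> C * h ^ (p + 2) / (1 - q)"
    by (intro neumann_inv_error[where v = "\<lambda>z. h\<^sup>2 * w z"] diff contraction q) auto
  have lhs: "\<bar>h\<^sup>2 * w x - neumann_inv A g x\<bar> = h\<^sup>2 * \<bar>w x - 1 / h\<^sup>2 * neumann_inv A g x\<bar>"
    using \<open>h \<noteq> 0\<close> by (simp add: abs_mult field_simps)
  have rhs: "C * h ^ (p + 2) / (1 - q) = h\<^sup>2 * (C / (1 - q) * h ^ p)"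
    by (simp only: power_add) (simp add: mult_ac)
  have "h\<^sup>2 * \<bar>w x - 1 / h\<^sup>2 * neumann_inv A g x\<bar> \<le> h\<^sup>2 * (C / (1 - q) * h ^ p)"
    using scaled unfolding lhs rhs .
  then show ?thesis
    by (rule mult_left_le_imp_le) (use \<open>h \<noteq> 0\<close> in simp)
qed

lemma dx2_scheme_error:
  fixes D :: "nat \<Rightarrow> real \<Rightarrow> real" and a b :: "int \<Rightarrow> real"
  assumes stencil: "\<And>v y. v y - \<kappa> * (dx2 h ^^ r) v y - g y
      = (\<Sum>m\<in>S. a m * D 0 (y + of_int m * h) + b m * v (y + of_int m * h))"
    and consistent: "\<And>c. (\<Sum>m\<in>S. a m * (\<Sum>k<n. of_int m ^ k * c k)
      + b m * (\<Sum>k<p. of_int m ^ k * (real ((k + 2) * (k + 1)) * c (k + 2)))) = 0"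
    and weights: "(\<Sum>m\<in>S. \<bar>a m\<bar> * \<bar>of_int m\<bar> ^ n + \<bar>b m\<bar> * \<bar>of_int m\<bar> ^ p) = W"
    and "n = p + 2"
    and der: "\<And>j z. j < n \<Longrightarrow> (D j has_real_derivative D (Suc j) z) (at z)"
    and bnd: "\<And>z. \<bar>D n z\<bar> \<le> B" and bounded: "\<And>z. \<bar>D 2 z\<bar> \<le> M"
    and "h > 0" and ratio: "\<bar>\<kappa>\<bar> * 4 ^ r < 1" and "finite S"
  shows "\<bar>D 2 x - 1 / h\<^sup>2 * neumann_inv (\<lambda>\<phi> y. \<kappa> * (dx2 h ^^ r) \<phi> y) g x\<bar>
           \<le> W * B / (1 - \<bar>\<kappa>\<bar> * 4 ^ r) * h ^ p"
proof (rule neumann_scheme_error[where w = "D 2"])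
  show "\<bar>h\<^sup>2 * D 2 y - \<kappa> * (dx2 h ^^ r) (\<lambda>z. h\<^sup>2 * D 2 z) y - g y\<bar> \<le> W * B * h ^ (p + 2)" for y
  proof -
    define c where "c k = D k y * h ^ k / fact k" for k
    have "\<bar>\<Sum>m\<in>S. a m * D 0 (y + of_int m * h) + b m * (h\<^sup>2 * D 2 (y + of_int m * h))\<bar>
        \<le> (\<Sum>m\<in>S. \<bar>a m\<bar> * (\<bar>of_int m\<bar> ^ n * (B * h ^ n))
              + \<bar>b m\<bar> * (\<bar>of_int m\<bar> ^ p * (B * h ^ n)))"
    proof (rule stencil_error_bound[OF \<open>finite S\<close> _ _ consistent[of c]])
      show "\<bar>D 0 (y + of_int m * h) - (\<Sum>k<n. of_int m ^ k * c k)\<bar> \<le> \<bar>of_int m\<bar> ^ n * (B * h ^ n)" for m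
        using taylor_grid[OF der bnd, of y m h] \<open>h > 0\<close> by (simp add: c_def)
      show "\<bar>h\<^sup>2 * D 2 (y + of_int m * h) - (\<Sum>k<p. of_int m ^ k * (real ((k + 2) * (k + 1)) * c (k + 2)))\<bar>
          \<le> \<bar>of_int m\<bar> ^ p * (B * h ^ n)" for m
        using taylor_grid_second_derivative[of p D B h y m] der bnd \<open>h > 0\<close> \<open>n = p + 2\<close>
        by (simp add: c_def)
    qed
    also have "\<dots> = (\<Sum>m\<in>S. \<bar>a m\<bar> * \<bar>of_int m\<bar> ^ n + \<bar>b m\<bar> * \<bar>of_int m\<bar> ^ p) * (B * h ^ n)"
      by (simp only: sum_distrib_right distrib_right mult.assoc)
    also have "\<dots> = W * B * h ^ (p + 2)"
      by (simp only: weights) (simp only: \<open>n = p + 2\<close> mult.assoc)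
    finally show ?thesis
      unfolding stencil[of "\<lambda>z. h\<^sup>2 * D 2 z" y] .
  qed
  show "\<forall>y. \<bar>\<kappa> * (dx2 h ^^ r) \<phi> y\<bar> \<le> \<bar>\<kappa>\<bar> * 4 ^ r * N" if "\<forall>y. \<bar>\<phi> y\<bar> \<le> N" for \<phi> N
    using funpow_dx2_bounded[OF that, where h = h and n = r] by (simp add: abs_mult mult_left_mono mult.assoc)
qed (use bounded ratio \<open>h > 0\<close> in \<open>simp_all add: funpow_dx2_diff fun_eq_iff right_diff_distrib\<close>)

text \<open>Stencil weights of the residual; their values off the stencil are irrelevant.\<close>

definition L1_weight_f :: "int \<Rightarrow> real" where
  "L1_weight_f m = (if m = 0 then 5/2 else if \<bar>m\<bar> = 1 then -4/3 else 1/12)"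

definition L1_weight_v :: "int \<Rightarrow> real" where
  "L1_weight_v m = (if m = 0 then 14/15 else if \<bar>m\<bar> = 1 then 2/45 else -1/90)"

lemma L1_residual_stencil:
  "v y - (1/90) * (dx2 h ^^ 2) v y - dx2 h (\<lambda>z. f z - 1/12 * dx2 h f z) y
   = (\<Sum>m\<in>{-2,-1,0,1,2}. L1_weight_f m * f (y + of_int m * h) + L1_weight_v m * v (y + of_int m * h))"
proof -
  have "y + h + h = y + 2 * h" "y - h - h = y - 2 * h" "y + h - h = y" "y - h + h = y"
    by simp_all
  then show ?thesis
    by (simp add: dx2_def numeral_2_eq_2 L1_weight_f_def L1_weight_v_def) (simp add: field_simps)
qed

lemma L1_stencil_consistent:
  "(\<Sum>m\<in>{-2,-1,0,1,2}. L1_weight_f m * (\<Sum>k<8. of_int m ^ k * c k)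
      + L1_weight_v m * (\<Sum>k<6. of_int m ^ k * (real ((k + 2) * (k + 1)) * c (k + 2)))) = 0"
  by (simp add: eval_nat_numeral L1_weight_f_def L1_weight_v_def field_simps)

lemma L1_stencil_weight_sum:
  "(\<Sum>m\<in>{-2,-1,0,1,2}. \<bar>L1_weight_f m\<bar> * \<bar>of_int m\<bar> ^ 8 + \<bar>L1_weight_v m\<bar> * \<bar>of_int m\<bar> ^ 6) = 2108/45"
  by (simp add: L1_weight_f_def L1_weight_v_def)

lemma L1_error:
  fixes D :: "nat \<Rightarrow> real \<Rightarrow> real"
  assumes der: "\<And>j z. j < 8 \<Longrightarrow> (D j has_real_derivative D (Suc j) z) (at z)"
    and bnd: "\<And>z. \<bar>D 8 z\<bar> \<le> B" and bounded: "\<And>z. \<bar>D 2 z\<bar> \<le> M" and "h > 0"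
  shows "\<bar>D 2 x - L1 h (D 0) x\<bar> \<le> 2108/37 * B * h ^ 6"
proof -
  have "\<bar>D 2 x - L1 h (D 0) x\<bar> \<le> 2108/45 * B / (1 - \<bar>1/90\<bar> * 4 ^ 2) * h ^ 6"
    unfolding L1_def
    by (rule dx2_scheme_error[where D = D and x = x,
          OF L1_residual_stencil L1_stencil_consistent L1_stencil_weight_sum])
      (use der bnd bounded \<open>h > 0\<close> in simp_all)
  also have "\<dots> = 2108/37 * B * h ^ 6"
    by simp
  finally show ?thesis .
qed

definition L2_weight_f :: "int \<Rightarrow> real" where
  "L2_weight_f m = (if m = 0 then 49/18 else if \<bar>m\<bar> = 1 then -3/2 else if \<bar>m\<bar> = 2 then 3/20 else -1/90)"

definition L2_weight_v :: "int \<Rightarrow> real" where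
  "L2_weight_v m = (if m = 0 then 27/28 else if \<bar>m\<bar> = 1 then 3/112 else if \<bar>m\<bar> = 2 then -3/280 else 1/560)"

lemma L2_residual_stencil:
  "v y - - (1/560) * (dx2 h ^^ 3) v y - dx2 h (\<lambda>z. f z - 1/12 * dx2 h f z + 1/90 * (dx2 h ^^ 2) f z) y
   = (\<Sum>m\<in>{-3,-2,-1,0,1,2,3}. L2_weight_f m * f (y + of_int m * h) + L2_weight_v m * v (y + of_int m * h))"
proof -
  have "y + h + h = y + 2 * h" "y - h - h = y - 2 * h" "y + h - h = y" "y - h + h = y"
    "y + h + h + h = y + 3 * h" "y - h - h - h = y - 3 * h"
    "y + h + h - h = y + h" "y - h - h + h = y - h" "y + h - h + h = y + h" "y - h + h - h = y - h"
    "y + h - h - h = y - h" "y - h + h + h = y + h"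
    by simp_all
  then show ?thesis
    by (simp add: dx2_def numeral_2_eq_2 numeral_3_eq_3 L2_weight_f_def L2_weight_v_def) (simp add: field_simps)
qed

lemma L2_stencil_consistent:
  "(\<Sum>m\<in>{-3,-2,-1,0,1,2,3}. L2_weight_f m * (\<Sum>k<10. of_int m ^ k * c k)
      + L2_weight_v m * (\<Sum>k<8. of_int m ^ k * (real ((k + 2) * (k + 1)) * c (k + 2)))) = 0"
  by (simp add: eval_nat_numeral L2_weight_f_def L2_weight_v_def field_simps)

lemma L2_stencil_weight_sum:
  "(\<Sum>m\<in>{-3,-2,-1,0,1,2,3}. \<bar>L2_weight_f m\<bar> * \<bar>of_int m\<bar> ^ 10 + \<bar>L2_weight_v m\<bar> * \<bar>of_int m\<bar> ^ 8) = 57798/35"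
  by (simp add: L2_weight_f_def L2_weight_v_def)

lemma L2_error:
  fixes D :: "nat \<Rightarrow> real \<Rightarrow> real"
  assumes der: "\<And>j z. j < 10 \<Longrightarrow> (D j has_real_derivative D (Suc j) z) (at z)"
    and bnd: "\<And>z. \<bar>D 10 z\<bar> \<le> B" and bounded: "\<And>z. \<bar>D 2 z\<bar> \<le> M" and "h > 0"
  shows "\<bar>D 2 x - L2 h (D 0) x\<bar> \<le> 57798/31 * B * h ^ 8"
proof -
  have "\<bar>D 2 x - L2 h (D 0) x\<bar> \<le> 57798/35 * B / (1 - \<bar>- (1/560)\<bar> * 4 ^ 3) * h ^ 8"
    unfolding L2_def
    by (rule dx2_scheme_error[where D = D and x = x,
          OF L2_residual_stencil L2_stencil_consistent L2_stencil_weight_sum])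
      (use der bnd bounded \<open>h > 0\<close> in simp_all)
  also have "\<dots> = 57798/31 * B * h ^ 8"
    by simp
  finally show ?thesis .
qed

theorem lemma1:
  fixes u :: "real \<Rightarrow> real \<Rightarrow> real" and t :: real
  assumes smooth: "\<And>k x. k < 10 \<Longrightarrow> (deriv ^^ k) (\<lambda>x. u x t) differentiable (at x)"
      and bdd: "\<And>k. 1 \<le> k \<Longrightarrow> k \<le> 10 \<Longrightarrow> bounded (range ((deriv ^^ k) (\<lambda>x. u x t)))"
  shows "(\<exists>C. \<forall>h>0. \<forall>j::int.
            \<bar>(deriv ^^ 2) (\<lambda>x. u x t) (of_int j * h) - L1 h (\<lambda>x. u x t) (of_int j * h)\<bar> \<le> C * h ^ 6)
       \<and> (\<exists>C. \<forall>h>0. \<forall>j::int.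
            \<bar>(deriv ^^ 2) (\<lambda>x. u x t) (of_int j * h) - L2 h (\<lambda>x. u x t) (of_int j * h)\<bar> \<le> C * h ^ 8)"
proof -
  define D where "D k = (deriv ^^ k) (\<lambda>x. u x t)" for k
  have der: "(D j has_real_derivative D (Suc j) z) (at z)" if "j < 10" for j z
    using smooth[OF that] by (simp add: D_def DERIV_deriv_iff_real_differentiable)
  have bounded: "\<exists>B. \<forall>z. \<bar>D k z\<bar> \<le> B" if "1 \<le> k" "k \<le> 10" for k
    using bdd[OF that] unfolding bounded_iff D_def by auto
  obtain M where M: "\<And>z. \<bar>D 2 z\<bar> \<le> M"
    using bounded[of 2] by auto
  obtain B8 where B8: "\<And>z. \<bar>D 8 z\<bar> \<le> B8"
    using bounded[of 8] by auto
  obtain B10 where B10: "\<And>z. \<bar>D 10 z\<bar> \<le> B10"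
    using bounded[of 10] by auto
  have "\<bar>D 2 x - L1 h (D 0) x\<bar> \<le> 2108/37 * B8 * h ^ 6" if "h > 0" for h x
    by (rule L1_error[OF _ B8 M that]) (simp add: der)
  moreover have "\<bar>D 2 x - L2 h (D 0) x\<bar> \<le> 57798/31 * B10 * h ^ 8" if "h > 0" for h x
    by (rule L2_error[OF der B10 M that])
  ultimately show ?thesis
    unfolding D_def funpow_0 id_apply by blast
qed

end
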